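(* Let $M$ be a non-empty subset of $\operatorname{Sym}(n,\mathbb{R})$. The following are equivalent: (i) $M$ is non-dissipative, i.e. $0$ is the only positive semidefinite element of $\operatorname{span}_{\mathbb{R}}M$; (ii) there is a positive definite matrix $Q>0$ such that $\operatorname{tr}({}^tQFQ)=0$ for every $F\in M$; (iii) there is $T\in\operatorname{GL}(n,\mathbb{R})$ such that $\operatorname{tr}({}^tTFT)=0$ for every $F\in M$. *)

theory Defs
  imports "HOL-Analysis.Analysis"
begin

definition sym_mat :: "real^'n^'n \<Rightarrow> bool" where
  "sym_mat A \<longleftrightarrow> transpose A = A"

definition pos_semidef :: "real^'n^'n \<Rightarrow> bool" where
  "pos_semidef A \<longleftrightarrow> sym_mat A \<and> (\<forall>x. 0 \<le> x \<bullet> (A *v x))"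

definition pos_def :: "real^'n^'n \<Rightarrow> bool" where
  "pos_def A \<longleftrightarrow> sym_mat A \<and> (\<forall>x. x \<noteq> 0 \<longrightarrow> 0 < x \<bullet> (A *v x))"

definition non_dissipative :: "(real^'n^'n) set \<Rightarrow> bool" where
  "non_dissipative M \<longleftrightarrow> (\<forall>A\<in>span M. pos_semidef A \<longrightarrow> A = 0)"

end

theory Submission
  imports Defs
begin

text \<open>
  Everything rests on the identity tr(T^t F T) = <T T^t, F> for the Frobenius inner product.
  (iii) implies (i): if A in span M is positive semidefinite, then so is T^t A T, whose trace
  <T T^t, A> vanishes; a positive semidefinite matrix of trace 0 is 0, and T is invertible.
  (i) implies (ii): the convex hull of the matrices x x^t with |x| = 1 is compact and consists
  of positive semidefinite matrices of trace 1, so it misses the subspace span M and is strictly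
  separated from it by a functional <a, _>. This functional vanishes on span M and x^t a x > 0
  for x \<noteq> 0, so the symmetric part P of a is positive definite and, as M consists of
  symmetric matrices, orthogonal to M. Its square root Q, built from an orthonormal eigenbasis
  (the spectral theorem, obtained by maximising the Rayleigh quotient on invariant subspaces),
  satisfies tr(Q^t F Q) = <P, F> = 0. (ii) implies (iii) since positive definite matrices are
  invertible.
\<close>

lemma linear_coeff_eq_0_if_quadratic_nonneg:
  fixes a b :: real
  assumes "\<And>t. 0 \<le> 2 * t * a + t\<^sup>2 * b"
  shows "a = 0"
proof (rule ccontr)
  assume "a \<noteq> 0"
  define c where "c = \<bar>b\<bar> + 1"
  have "c > 0" "b - 2 * c < 0"
    unfolding c_def by auto
  have "0 \<le> 2 * (- a / c) * a + (- a / c)\<^sup>2 * b"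
    by (rule assms)
  also have "\<dots> = (a / c)\<^sup>2 * (b - 2 * c)"
    using \<open>c > 0\<close> by (simp add: field_simps power2_eq_square)
  also have "\<dots> < 0"
    using \<open>a \<noteq> 0\<close> \<open>c > 0\<close> \<open>b - 2 * c < 0\<close> by (simp add: mult_pos_neg)
  finally show False by simp
qed

lemma sym_mat_inner_commute:
  fixes A :: "real^'n^'n"
  assumes "sym_mat A"
  shows "x \<bullet> (A *v y) = y \<bullet> (A *v x)"
  by (metis assms dot_lmul_matrix inner_commute sym_mat_def transpose_matrix_vector)

lemma sym_mat_iff_inner_commute:
  fixes A :: "real^'n^'n"
  shows "sym_mat A \<longleftrightarrow> (\<forall>x y. x \<bullet> (A *v y) = y \<bullet> (A *v x))"
proof
  assume "\<forall>x y. x \<bullet> (A *v y) = y \<bullet> (A *v x)"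
  then have "\<forall>x y. (transpose A *v x) \<bullet> y = (A *v x) \<bullet> y"
    by (metis dot_lmul_matrix inner_commute transpose_matrix_vector)
  then show "sym_mat A"
    unfolding sym_mat_def by (metis matrix_eq vector_eq_rdot)
qed (use sym_mat_inner_commute in blast)

lemma nonneg_form_isotropic_orthogonal:
  fixes A :: "real^'n^'n"
  assumes "sym_mat A" "subspace S" "\<And>x. x \<in> S \<Longrightarrow> 0 \<le> x \<bullet> (A *v x)"
    and "y \<in> S" "y \<bullet> (A *v y) = 0" "w \<in> S"
  shows "w \<bullet> (A *v y) = 0"
proof (rule linear_coeff_eq_0_if_quadratic_nonneg)
  fix t :: real
  have "y + t *\<^sub>R w \<in> S"
    using assms(2,4,6) by (simp add: subspace_add subspace_scale)
  then have "0 \<le> (y + t *\<^sub>R w) \<bullet> (A *v (y + t *\<^sub>R w))"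
    by (rule assms(3))
  also have "\<dots> = 2 * t * (w \<bullet> (A *v y)) + t\<^sup>2 * (w \<bullet> (A *v w))"
    using assms(5) sym_mat_inner_commute[OF assms(1), of y w]
    by (simp add: matrix_vector_right_distrib matrix_vector_mult_scaleR inner_add_left
        inner_add_right algebra_simps power2_eq_square)
  finally show "0 \<le> 2 * t * (w \<bullet> (A *v y)) + t\<^sup>2 * (w \<bullet> (A *v w))" .
qed

lemma pos_semidef_isotropic_imp_kernel:
  fixes A :: "real^'n^'n"
  assumes "pos_semidef A" "y \<bullet> (A *v y) = 0"
  shows "A *v y = 0"
proof -
  have "(A *v y) \<bullet> (A *v y) = 0"
    using assms by (intro nonneg_form_isotropic_orthogonal[of A UNIV y "A *v y"])
      (auto simp: pos_semidef_def)
  then show ?thesis by simp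
qed

lemma sym_mat_invariant_subspace_unit_eigenvector:
  fixes A :: "real^'n^'n"
  assumes "sym_mat A" "subspace S" "\<And>x. x \<in> S \<Longrightarrow> A *v x \<in> S" "S \<noteq> {0}"
  obtains v c where "v \<in> S" "norm v = 1" "A *v v = c *\<^sub>R v"
proof -
  define K where "K = S \<inter> sphere 0 1"
  have unit_in_K: "x /\<^sub>R norm x \<in> K" if "x \<in> S" "x \<noteq> 0" for x
    using that assms(2) by (simp add: K_def subspace_scale)
  have "compact K"
    unfolding K_def by (intro closed_Int_compact closed_subspace assms(2) compact_sphere)
  moreover have "K \<noteq> {}"
    using assms(4) unit_in_K subspace_0[OF assms(2)] by blast
  moreover have "continuous_on K (\<lambda>x. x \<bullet> (A *v x))"
    by (intro continuous_intros matrix_vector_mult_linear_continuous_on)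
  ultimately obtain v where "v \<in> K"
    and v_max: "\<And>y. y \<in> K \<Longrightarrow> y \<bullet> (A *v y) \<le> v \<bullet> (A *v v)"
    using continuous_attains_sup[of K "\<lambda>x. x \<bullet> (A *v x)"] by blast
  define l where "l = v \<bullet> (A *v v)"
  \<comment> \<open>Maximality of v makes l I - A positive semidefinite on S, and it is isotropic at v.\<close>
  define D where "D = l *\<^sub>R mat 1 - A"
  have D_apply: "D *v x = l *\<^sub>R x - A *v x" for x
    by (simp add: D_def matrix_vector_mult_diff_rdistrib scaleR_matrix_vector_assoc[symmetric])
  have "v \<in> S" "norm v = 1"
    using \<open>v \<in> K\<close> by (auto simp: K_def)
  have "sym_mat D"
    using assms(1) unfolding sym_mat_iff_inner_commute
    by (simp add: D_apply inner_diff_right inner_commute)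
  moreover have "0 \<le> x \<bullet> (D *v x)" if "x \<in> S" for x
  proof (cases "x = 0")
    case False
    have "(x /\<^sub>R norm x) \<bullet> (A *v (x /\<^sub>R norm x)) \<le> l"
      unfolding l_def using unit_in_K[OF that False] by (rule v_max)
    moreover have "(x /\<^sub>R norm x) \<bullet> (A *v (x /\<^sub>R norm x)) = (x \<bullet> (A *v x)) / (norm x)\<^sup>2"
      by (simp add: matrix_vector_mult_scaleR power2_eq_square divide_inverse mult.assoc)
    ultimately have "x \<bullet> (A *v x) \<le> l * (norm x)\<^sup>2"
      using False by (simp add: divide_le_eq)
    then show ?thesis
      by (simp add: D_apply inner_diff_right power2_norm_eq_inner)
  qed simp
  moreover have "v \<bullet> (D *v v) = 0"
    using \<open>norm v = 1\<close> by (simp add: D_apply inner_diff_right l_def norm_eq_1)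
  moreover have "D *v v \<in> S"
    using \<open>v \<in> S\<close> assms(2,3) by (simp add: D_apply subspace_diff subspace_scale)
  ultimately have "(D *v v) \<bullet> (D *v v) = 0"
    using nonneg_form_isotropic_orthogonal[of D S v "D *v v"] assms(2) \<open>v \<in> S\<close> by blast
  then have "A *v v = l *\<^sub>R v"
    by (simp add: D_apply)
  with \<open>v \<in> S\<close> \<open>norm v = 1\<close> show thesis by (rule that)
qed

lemma sym_mat_invariant_subspace_orthonormal_eigenbasis:
  fixes A :: "real^'n^'n"
  assumes "sym_mat A" "subspace S" "\<And>x. x \<in> S \<Longrightarrow> A *v x \<in> S"
  shows "\<exists>B. B \<subseteq> S \<and> finite B \<and> pairwise orthogonal B \<and> S \<subseteq> span B \<and>
      (\<forall>b\<in>B. norm b = 1 \<and> (\<exists>c. A *v b = c *\<^sub>R b))"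
  using assms(2,3)
proof (induction "dim S" arbitrary: S rule: less_induct)
  case less
  show ?case
  proof (cases "S = {0}")
    case True
    then show ?thesis by (intro exI[of _ "{}"]) auto
  next
    case False
    then obtain v c where v: "v \<in> S" "norm v = 1" "A *v v = c *\<^sub>R v"
      using sym_mat_invariant_subspace_unit_eigenvector[OF assms(1) less.prems] by blast
    define S' where "S' = S \<inter> {x. x \<bullet> v = 0}"
    have "subspace S'"
      unfolding S'_def using less.prems(1) subspace_hyperplane2 by (rule subspace_inter)
    have invariant': "A *v x \<in> S'" if "x \<in> S'" for x
    proof -
      have "(A *v x) \<bullet> v = c * (x \<bullet> v)"
        using sym_mat_inner_commute[OF assms(1), of v x] v(3) by (simp add: inner_commute)
      then show ?thesis
        using that less.prems(2) by (simp add: S'_def)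
    qed
    have "dim S' < dim S"
    proof (rule dim_psubset)
      have "v \<notin> S'"
        using v(2) by (simp add: S'_def norm_eq_1)
      moreover have "S' \<subseteq> S"
        by (simp add: S'_def)
      ultimately have "S' \<subset> S"
        using v(1) by blast
      then show "span S' \<subset> span S"
        using \<open>subspace S'\<close> less.prems(1) by (simp only: span_eq_iff[THEN iffD2])
    qed
    then obtain B where B: "B \<subseteq> S'" "finite B" "pairwise orthogonal B" "S' \<subseteq> span B"
        "\<forall>b\<in>B. norm b = 1 \<and> (\<exists>c. A *v b = c *\<^sub>R b)"
      using less.hyps[OF _ \<open>subspace S'\<close> invariant'] by blast
    have "S \<subseteq> span (insert v B)"
    proof
      fix x assume "x \<in> S"
      then have "x - (x \<bullet> v) *\<^sub>R v \<in> S'"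
        using v(1,2) less.prems(1)
        by (simp add: S'_def subspace_diff subspace_scale inner_diff_left norm_eq_1)
      then show "x \<in> span (insert v B)"
        using B(4) span_breakdown_eq by blast
    qed
    moreover have "pairwise orthogonal (insert v B)"
      using B(1,3) by (auto simp: pairwise_insert S'_def orthogonal_def inner_commute)
    ultimately show ?thesis
      using B v less.prems(1) by (intro exI[of _ "insert v B"]) (auto simp: S'_def)
  qed
qed

lemma sym_mat_orthonormal_eigenbasis:
  fixes A :: "real^'n^'n"
  assumes "sym_mat A"
  obtains B and l :: "real^'n \<Rightarrow> real"
  where "finite B" "pairwise orthogonal B" "\<And>b. b \<in> B \<Longrightarrow> norm b = 1"
    and "\<And>b. b \<in> B \<Longrightarrow> A *v b = l b *\<^sub>R b"
    and "\<And>x. (\<Sum>b\<in>B. (x \<bullet> b) *\<^sub>R b) = x"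
proof -
  obtain B where B: "finite B" "pairwise orthogonal B" "UNIV \<subseteq> span B"
      "\<forall>b\<in>B. norm b = 1 \<and> (\<exists>c. A *v b = c *\<^sub>R b)"
    using sym_mat_invariant_subspace_orthonormal_eigenbasis[OF assms subspace_UNIV] by blast
  then obtain l where "\<And>b. b \<in> B \<Longrightarrow> A *v b = l b *\<^sub>R b"
    using bchoice[of B "\<lambda>b c. A *v b = c *\<^sub>R b"] by blast
  moreover have "(\<Sum>b\<in>B. (x \<bullet> b) *\<^sub>R b) = x" for x
    using B by (intro orthonormal_basis_expand) auto
  ultimately show thesis
    using B that by blast
qed

lemma inner_orthonormal_sum:
  fixes B :: "'a::real_inner set"
  assumes "finite B" "pairwise orthogonal B" "\<And>b. b \<in> B \<Longrightarrow> norm b = 1" "b \<in> B"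
  shows "b \<bullet> (\<Sum>c\<in>B. f c *\<^sub>R c) = f b"
proof -
  have "b \<bullet> (\<Sum>c\<in>B. f c *\<^sub>R c) = (\<Sum>c\<in>B. if c = b then f c else 0)"
    unfolding inner_sum_right
  proof (rule sum.cong)
    fix c assume "c \<in> B"
    then show "b \<bullet> (f c *\<^sub>R c) = (if c = b then f c else 0)"
      using assms(2-4) by (auto simp: pairwise_def orthogonal_def norm_eq_1)
  qed simp
  also have "\<dots> = f b"
    using assms(1,4) by (simp add: sum.delta')
  finally show ?thesis .
qed

lemma pos_def_sqrt:
  fixes P :: "real^'n^'n"
  assumes "pos_def P"
  obtains Q where "pos_def Q" "Q ** Q = P"
proof -
  obtain B l where B: "finite B" "pairwise orthogonal B" "\<And>b. b \<in> B \<Longrightarrow> norm b = 1"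
    and eigen: "\<And>b. b \<in> B \<Longrightarrow> P *v b = l b *\<^sub>R b"
    and expand: "\<And>x. (\<Sum>b\<in>B. (x \<bullet> b) *\<^sub>R b) = x"
    using sym_mat_orthonormal_eigenbasis assms unfolding pos_def_def by blast
  have l_pos: "0 < l b" if "b \<in> B" for b
  proof -
    have "b \<noteq> 0"
      using B(3)[OF that] by auto
    then have "0 < b \<bullet> (P *v b)"
      using assms by (simp add: pos_def_def)
    also have "\<dots> = l b"
      using B(3)[OF that] by (simp add: eigen[OF that] norm_eq_1)
    finally show ?thesis .
  qed
  define q where "q x = (\<Sum>b\<in>B. (sqrt (l b) * (b \<bullet> x)) *\<^sub>R b)" for x
  have "linear q"
    unfolding q_def by (rule linearI)
      (simp_all add: inner_add_right scaleR_add_left sum.distrib scaleR_sum_right algebra_simps)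
  define Q where "Q = matrix q"
  have Q_apply: "Q *v x = q x" for x
    unfolding Q_def using \<open>linear q\<close> by simp
  have inner_q: "b \<bullet> q x = sqrt (l b) * (b \<bullet> x)" if "b \<in> B" for b x
    unfolding q_def using inner_orthonormal_sum[OF B that] .
  have "Q ** Q = P"
  proof (rule matrix_eq[THEN iffD2], intro allI)
    fix x
    have "Q ** Q *v x = (\<Sum>b\<in>B. (x \<bullet> b) *\<^sub>R (l b *\<^sub>R b))"
      unfolding matrix_vector_mul_assoc[symmetric] Q_apply q_def[of "q x"]
      using l_pos by (intro sum.cong refl) (simp add: inner_q inner_commute less_imp_le)
    also have "\<dots> = P *v (\<Sum>b\<in>B. (x \<bullet> b) *\<^sub>R b)"
      by (simp add: eigen vec.sum matrix_vector_mult_scaleR)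
    also have "\<dots> = P *v x"
      by (simp only: expand)
    finally show "Q ** Q *v x = P *v x" .
  qed
  moreover have "sym_mat Q"
    unfolding sym_mat_iff_inner_commute Q_apply q_def
    by (simp add: inner_sum_right inner_commute mult.commute mult.left_commute)
  moreover have "0 < x \<bullet> (Q *v x)" if "x \<noteq> 0" for x
  proof -
    have "\<exists>b\<in>B. b \<bullet> x \<noteq> 0"
    proof (rule ccontr)
      assume "\<not> (\<exists>b\<in>B. b \<bullet> x \<noteq> 0)"
      then have "x = 0"
        using expand[of x] by (simp add: inner_commute)
      with that show False ..
    qed
    then obtain b where "b \<in> B" "b \<bullet> x \<noteq> 0" ..
    then have "0 < sqrt (l b) * (b \<bullet> x)\<^sup>2"
      using l_pos by simp
    also have "\<dots> \<le> (\<Sum>c\<in>B. sqrt (l c) * (c \<bullet> x)\<^sup>2)"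
      using B(1) \<open>b \<in> B\<close> l_pos by (intro member_le_sum) (auto simp: less_imp_le)
    also have "\<dots> = x \<bullet> (Q *v x)"
      by (simp add: Q_apply q_def inner_sum_right inner_commute power2_eq_square mult.assoc)
    finally show ?thesis .
  qed
  ultimately show thesis
    by (intro that) (auto simp: pos_def_def)
qed

lemma inner_transpose_matrix_vector:
  fixes A :: "real^'n^'m"
  shows "x \<bullet> (transpose A *v y) = (A *v x) \<bullet> y"
  by (metis dot_lmul_matrix inner_commute transpose_matrix_vector)

lemma trace_transpose_mult:
  fixes A B :: "real^'n^'m"
  shows "trace (transpose A ** B) = A \<bullet> B"
proof -
  have "trace (transpose A ** B) = (\<Sum>j\<in>UNIV. \<Sum>i\<in>UNIV. A$i$j * B$i$j)"
    by (simp add: trace_def matrix_matrix_mult_def transpose_def)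
  also have "\<dots> = A \<bullet> B"
    by (subst sum.swap) (simp add: inner_vec_def)
  finally show ?thesis .
qed

lemma trace_congruence:
  fixes X F :: "real^'n^'n"
  shows "trace (transpose X ** F ** X) = (X ** transpose X) \<bullet> F"
proof -
  have "trace (transpose X ** F ** X) = trace (X ** (transpose X ** F))"
    by (rule trace_mul_sym)
  also have "\<dots> = trace (X ** transpose X ** F)"
    by (simp add: matrix_mul_assoc)
  also have "\<dots> = trace (transpose (X ** transpose X) ** F)"
    by (simp add: matrix_transpose_mul)
  finally show ?thesis
    by (simp add: trace_transpose_mult)
qed

lemma inner_transpose:
  fixes A :: "real^'n^'m" and B :: "real^'m^'n"
  shows "transpose A \<bullet> B = A \<bullet> transpose B"
proof -
  have "transpose A \<bullet> B = (\<Sum>i\<in>UNIV. \<Sum>j\<in>UNIV. A$j$i * B$i$j)"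
    by (simp add: inner_vec_def transpose_def)
  also have "\<dots> = A \<bullet> transpose B"
    by (subst sum.swap) (simp add: inner_vec_def transpose_def)
  finally show ?thesis .
qed

lemma pos_semidef_congruence:
  fixes A T :: "real^'n^'n"
  assumes "pos_semidef A"
  shows "pos_semidef (transpose T ** A ** T)"
proof -
  have "x \<bullet> ((transpose T ** A ** T) *v x) = (T *v x) \<bullet> (A *v (T *v x))" for x
    by (simp only: matrix_vector_mul_assoc[symmetric] inner_transpose_matrix_vector)
  then show ?thesis
    using assms by (simp add: pos_semidef_def sym_mat_def matrix_transpose_mul matrix_mul_assoc)
qed

lemma pos_semidef_trace_eq_0:
  fixes A :: "real^'n^'n"
  assumes "pos_semidef A" "trace A = 0"
  shows "A = 0"
proof -
  have diag: "A$i$i = axis i 1 \<bullet> (A *v axis i 1)" for i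
    by (simp add: matrix_vector_mult_basis column_def inner_axis')
  have "0 \<le> A$i$i" for i
    using assms(1) by (simp add: diag pos_semidef_def)
  then have "A$i$i = 0" for i
    using assms(2) sum_nonneg_eq_0_iff[of UNIV "\<lambda>i. A$i$i"] by (simp add: trace_def)
  then have "A *v axis i 1 = 0" for i
    using assms(1) diag pos_semidef_isotropic_imp_kernel by metis
  then show ?thesis
    by (simp add: matrix_vector_mult_basis column_def vec_eq_iff)
qed

lemma invertible_congruence_eq_0:
  fixes A T :: "real^'n^'n"
  assumes "invertible T" "transpose T ** A ** T = 0"
  shows "A = 0"
proof -
  obtain T' where "T ** T' = mat 1"
    using assms(1) invertible_def by blast
  then have "transpose T' ** transpose T = mat 1"
    by (metis matrix_transpose_mul transpose_mat)
  have "transpose T' ** (transpose T ** A ** T) ** T' = (transpose T' ** transpose T) ** A ** (T ** T')"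
    by (simp add: matrix_mul_assoc)
  then have "A = transpose T' ** (transpose T ** A ** T) ** T'"
    by (simp add: \<open>T ** T' = mat 1\<close> \<open>transpose T' ** transpose T = mat 1\<close>)
  then show ?thesis
    using assms(2) by simp
qed

definition outer :: "real^'n \<Rightarrow> real^'n^'n" where
  "outer x = (\<chi> i j. x$i * x$j)"

lemma outer_mult_vector: "outer x *v y = (x \<bullet> y) *\<^sub>R x"
  by (simp add: outer_def vec_eq_iff matrix_vector_mult_def inner_vec_def sum_distrib_left
      mult.commute mult.left_commute)

lemma inner_outer: "A \<bullet> outer x = x \<bullet> (A *v x)"
  by (simp add: outer_def inner_vec_def matrix_vector_mult_def sum_distrib_left
      mult.commute mult.left_commute)

lemma trace_outer: "trace (outer x) = x \<bullet> x"
  by (simp add: outer_def trace_def inner_vec_def)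

lemma pos_semidef_outer: "pos_semidef (outer x)"
  unfolding pos_semidef_def sym_mat_iff_inner_commute
  by (simp add: outer_mult_vector inner_commute)

lemma trace_eq_inner_mat_1:
  fixes A :: "real^'n^'n"
  shows "trace A = mat 1 \<bullet> A"
  using trace_transpose_mult[of "mat 1" A] by simp

lemma convex_pos_semidef: "convex {A :: real^'n^'n. pos_semidef A}"
proof (rule convexI)
  fix A B :: "real^'n^'n" and u v :: real
  assume "A \<in> {A. pos_semidef A}" "B \<in> {A. pos_semidef A}" "0 \<le> u" "0 \<le> v"
  moreover have "(u *\<^sub>R A + v *\<^sub>R B) *v x = u *\<^sub>R (A *v x) + v *\<^sub>R (B *v x)" for x
    by (simp add: matrix_vector_mult_add_rdistrib scaleR_matrix_vector_assoc)
  ultimately show "u *\<^sub>R A + v *\<^sub>R B \<in> {A. pos_semidef A}"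
    unfolding mem_Collect_eq pos_semidef_def sym_mat_iff_inner_commute
    by (simp add: inner_add_right)
qed

lemma non_dissipative_imp_separating_form:
  fixes M :: "(real^'n^'n) set"
  assumes "non_dissipative M"
  obtains a where "\<And>F. F \<in> span M \<Longrightarrow> a \<bullet> F = 0"
    and "\<And>y. y \<noteq> 0 \<Longrightarrow> 0 < y \<bullet> (a *v y)"
proof -
  define K :: "(real^'n^'n) set" where "K = convex hull (outer ` sphere 0 1)"
  have "continuous_on (sphere 0 1) outer"
    unfolding outer_def by (intro continuous_on_vec_lambda continuous_intros)
  then have "compact K"
    unfolding K_def by (intro compact_convex_hull compact_continuous_image compact_sphere)
  have "K \<noteq> {}" "convex K"
    by (simp_all add: K_def convex_convex_hull)
  have "K \<subseteq> {A. pos_semidef A} \<inter> {A. mat 1 \<bullet> A = 1}"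
    unfolding K_def
    by (intro hull_minimal convex_Int convex_pos_semidef convex_hyperplane)
      (auto simp: pos_semidef_outer trace_eq_inner_mat_1[symmetric] trace_outer norm_eq_1)
  have "A \<notin> K" if "A \<in> span M" for A
  proof
    assume "A \<in> K"
    then have "pos_semidef A" "mat 1 \<bullet> A = 1"
      using \<open>K \<subseteq> _\<close> by auto
    with that assms have "A = 0"
      by (simp add: non_dissipative_def)
    with \<open>mat 1 \<bullet> A = 1\<close> show False
      by simp
  qed
  then have "span M \<inter> K = {}"
    by blast
  with separating_hyperplane_closed_compact[OF subspace_imp_convex[OF subspace_span]
      closed_subspace[OF subspace_span] \<open>convex K\<close> \<open>compact K\<close> \<open>K \<noteq> {}\<close>]
  obtain a b where a_span: "\<And>F. F \<in> span M \<Longrightarrow> a \<bullet> F < b"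
      and a_K: "\<And>A. A \<in> K \<Longrightarrow> b < a \<bullet> A"
    by blast
  have "0 < b"
    using a_span[OF span_zero] by simp
  have a_zero: "a \<bullet> F = 0" if "F \<in> span M" for F
  proof (rule ccontr)
    assume "a \<bullet> F \<noteq> 0"
    have "(b / (a \<bullet> F)) *\<^sub>R F \<in> span M"
      using that by (rule span_mul)
    then have "a \<bullet> ((b / (a \<bullet> F)) *\<^sub>R F) < b"
      by (rule a_span)
    with \<open>a \<bullet> F \<noteq> 0\<close> show False
      by simp
  qed
  have "0 < y \<bullet> (a *v y)" if "y \<noteq> 0" for y
  proof -
    have "outer (y /\<^sub>R norm y) \<in> K"
      unfolding K_def using that by (intro hull_inc imageI) simp
    then have "b < (y /\<^sub>R norm y) \<bullet> (a *v (y /\<^sub>R norm y))"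
      unfolding inner_outer[symmetric] by (rule a_K)
    with \<open>0 < b\<close> have "0 < (y /\<^sub>R norm y) \<bullet> (a *v (y /\<^sub>R norm y))"
      by linarith
    with that show ?thesis
      by (simp add: matrix_vector_mult_scaleR zero_less_mult_iff)
  qed
  with a_zero show thesis
    by (rule that)
qed

lemma pos_def_imp_invertible:
  fixes Q :: "real^'n^'n"
  assumes "pos_def Q"
  shows "invertible Q"
proof -
  have "x = 0" if "Q *v x = 0" for x
    using assms that unfolding pos_def_def by (metis inner_zero_right less_irrefl)
  then show ?thesis
    by (metis invertible_left_inverse matrix_left_invertible_ker)
qed

lemma non_dissipative_if_invertible_traceless:
  fixes M :: "(real^'n^'n) set" and T :: "real^'n^'n"
  assumes "invertible T" "\<forall>F\<in>M. trace (transpose T ** F ** T) = 0"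
  shows "non_dissipative M"
  unfolding non_dissipative_def
proof (intro ballI impI)
  fix A assume "A \<in> span M" "pos_semidef A"
  have "orthogonal (T ** transpose T) A"
    using \<open>A \<in> span M\<close>
  proof (rule orthogonal_to_span)
    fix F assume "F \<in> M"
    then show "orthogonal (T ** transpose T) F"
      using assms(2) trace_congruence[of T F] by (simp add: orthogonal_def)
  qed
  then have "trace (transpose T ** A ** T) = 0"
    using trace_congruence[of T A] by (simp add: orthogonal_def)
  then have "transpose T ** A ** T = 0"
    using \<open>pos_semidef A\<close> by (intro pos_semidef_trace_eq_0 pos_semidef_congruence)
  with assms(1) show "A = 0"
    by (rule invertible_congruence_eq_0)
qed

lemma non_dissipative_imp_pos_def_traceless:
  fixes M :: "(real^'n^'n) set"
  assumes "\<forall>F\<in>M. sym_mat F" "non_dissipative M"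
  shows "\<exists>Q. pos_def Q \<and> (\<forall>F\<in>M. trace (transpose Q ** F ** Q) = 0)"
proof -
  obtain a where a_span: "\<And>F. F \<in> span M \<Longrightarrow> a \<bullet> F = 0"
    and a_pos: "\<And>y. y \<noteq> 0 \<Longrightarrow> 0 < y \<bullet> (a *v y)"
    using non_dissipative_imp_separating_form[OF assms(2)] by blast
  define P where "P = (1/2) *\<^sub>R (a + transpose a)"
  have P_apply: "x \<bullet> (P *v y) = (x \<bullet> (a *v y) + (a *v x) \<bullet> y) / 2" for x y
    by (simp add: P_def matrix_vector_mult_add_rdistrib scaleR_matrix_vector_assoc[symmetric]
        inner_add_right inner_transpose_matrix_vector del: transpose_matrix_vector)
  have "pos_def P"
    unfolding pos_def_def sym_mat_iff_inner_commute
    using a_pos by (simp add: P_apply inner_commute)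
  then obtain Q where "pos_def Q" "Q ** Q = P"
    by (rule pos_def_sqrt)
  moreover have "trace (transpose Q ** F ** Q) = 0" if "F \<in> M" for F
  proof -
    have "transpose Q = Q"
      using \<open>pos_def Q\<close> by (simp add: pos_def_def sym_mat_def)
    have "trace (transpose Q ** F ** Q) = (Q ** transpose Q) \<bullet> F"
      by (rule trace_congruence)
    also have "\<dots> = P \<bullet> F"
      using \<open>transpose Q = Q\<close> \<open>Q ** Q = P\<close> by simp
    also have "\<dots> = (a \<bullet> F + a \<bullet> transpose F) / 2"
      by (simp add: P_def inner_add_left inner_transpose)
    also have "\<dots> = 0"
      using that assms(1) a_span[OF span_base[OF that]] by (simp add: sym_mat_def)
    finally show ?thesis .
  qed
  ultimately show ?thesis
    by blast
qed

theorem lemma2p1: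
  fixes M :: "(real^'n^'n) set"
  assumes "M \<noteq> {}" and "\<forall>F\<in>M. sym_mat F"
  shows "(non_dissipative M \<longleftrightarrow>
           (\<exists>Q. pos_def Q \<and> (\<forall>F\<in>M. trace (transpose Q ** F ** Q) = 0)))
       \<and> ((\<exists>Q. pos_def Q \<and> (\<forall>F\<in>M. trace (transpose Q ** F ** Q) = 0)) \<longleftrightarrow>
           (\<exists>T::real^'n^'n. invertible T \<and> (\<forall>F\<in>M. trace (transpose T ** F ** T) = 0)))"
  using non_dissipative_imp_pos_def_traceless[OF assms(2)] pos_def_imp_invertible
    non_dissipative_if_invertible_traceless
  by blast

end
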